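(* For every $d\ge 4$, every $\beta\in(0,\infty)$ and every choice of pairwise distinct energies $E_0=0,E_1,\dots,E_{d-1}$, the convex set $TP(d)$ has an extreme point that is not biplanar.
   Context: Put $q_{m,n}=e^{-\beta(E_m-E_n)}$, $Z=\sum_j q_{j,0}$, $g_i=q_{i,0}/Z$. $TP(d)$ is the set of $d\times d$ real matrices $T$ with non-negative entries, each column summing to $1$, and $Tg=g$. For $T\in TP(d)$, $G(T)$ is the bipartite graph with left vertices $L_0,\dots,L_{d-1}$ (columns), right vertices $R_0,\dots,R_{d-1}$ (rows), and an edge $\{L_j,R_i\}$ iff $T_{ij}>0$. Given orderings $\lambda,\mu$ (permutations of $\{0,\dots,d-1\}$), place $L_{\lambda_a}$ at height $a$ on one vertical line and $R_{\mu_b}$ at height $b$ on a parallel line, edges drawn straight; the drawing is plain if there are no two edges $\{L_{\lambda_a},R_{\mu_b}\}$, $\{L_{\lambda_{a'}},R_{\mu_{b'}}\}$ with $a<a'$ and $b>b'$. An extreme point $T$ of $TP(d)$ is biplanar if some pair $(\lambda,\mu)$ gives a plain drawing of $G(T)$. *)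

theory Defs
  imports "HOL-Analysis.Analysis"
begin

text \<open>Matrices of size d are represented as functions nat => nat => real, T i j being the
entry in row i and column j, with all entries outside {..<d} x {..<d} equal to zero.\<close>

definition qf :: "(nat \<Rightarrow> real) \<Rightarrow> real \<Rightarrow> nat \<Rightarrow> nat \<Rightarrow> real" where
  "qf E \<beta> m n = exp (- \<beta> * (E m - E n))"

definition Zf :: "(nat \<Rightarrow> real) \<Rightarrow> real \<Rightarrow> nat \<Rightarrow> real" where
  "Zf E \<beta> d = (\<Sum>j<d. qf E \<beta> j 0)"

definition gf :: "(nat \<Rightarrow> real) \<Rightarrow> real \<Rightarrow> nat \<Rightarrow> nat \<Rightarrow> real" where
  "gf E \<beta> d i = qf E \<beta> i 0 / Zf E \<beta> d"

definition TP :: "(nat \<Rightarrow> real) \<Rightarrow> real \<Rightarrow> nat \<Rightarrow> (nat \<Rightarrow> nat \<Rightarrow> real) set" where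
  "TP E \<beta> d = {T. (\<forall>i j. (d \<le> i \<or> d \<le> j) \<longrightarrow> T i j = 0)
      \<and> (\<forall>i<d. \<forall>j<d. 0 \<le> T i j)
      \<and> (\<forall>j<d. (\<Sum>i<d. T i j) = 1)
      \<and> (\<forall>i<d. (\<Sum>j<d. T i j * gf E \<beta> d j) = gf E \<beta> d i)}"

text \<open>Extreme point of a set of matrices (the unfolded form of the library notion
extreme_point_of: not in the open segment between two distinct members).\<close>
definition extreme_mat :: "(nat \<Rightarrow> nat \<Rightarrow> real) \<Rightarrow> (nat \<Rightarrow> nat \<Rightarrow> real) set \<Rightarrow> bool" where
  "extreme_mat T S \<longleftrightarrow> T \<in> S \<and>
     \<not> (\<exists>A\<in>S. \<exists>B\<in>S. A \<noteq> B \<and>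
          (\<exists>t::real. 0 < t \<and> t < 1 \<and> T = (\<lambda>i j. (1 - t) * A i j + t * B i j)))"

text \<open>Plain drawing of G(T) for orderings lam (left/columns) and mu (right/rows):
L_(lam a) at height a, R_(mu b) at height b; edge {L_j, R_i} iff T i j > 0.\<close>
definition plain_drawing :: "nat \<Rightarrow> (nat \<Rightarrow> nat \<Rightarrow> real) \<Rightarrow> (nat \<Rightarrow> nat) \<Rightarrow> (nat \<Rightarrow> nat) \<Rightarrow> bool" where
  "plain_drawing d T lam mu \<longleftrightarrow>
     \<not> (\<exists>a a' b b'. a < d \<and> a' < d \<and> b < d \<and> b' < d \<and> a < a' \<and> b' < b \<and>
          0 < T (mu b) (lam a) \<and> 0 < T (mu b') (lam a'))"

definition biplanar :: "nat \<Rightarrow> (nat \<Rightarrow> nat \<Rightarrow> real) \<Rightarrow> bool" where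
  "biplanar d T \<longleftrightarrow> (\<exists>lam mu. bij_betw lam {..<d} {..<d} \<and> bij_betw mu {..<d} {..<d}
                          \<and> plain_drawing d T lam mu)"

end

theory Submission
  imports Defs
begin

(* Pick four states with Gibbs weights g1 > g2 > g3 > g4 and let T be the identity outside them,
   with G(T) restricted to them the spider L1-R1, L1-R2, L1-R3, R1-L2, R2-L3, R3-L4.  Along this
   tree the column sums and the fixed-point equations T g = g determine every entry, and the
   weights being strictly decreasing makes all of them positive; so T is the only member of TP(d)
   vanishing where T vanishes, which for a set of non-negative matrices means T is extreme.
   A spider has no plain drawing: of the three rows adjacent to L1, the middle one has a second
   neighbour drawn above or below L1, and its edge crosses one of the outer edges at L1. *)

lemma plain_drawing_middle_row:
  assumes "plain_drawing d T lam mu"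
    and "a < d" "a' < d" "b1 < d" "b3 < d"
    and "b1 < b \<and> b < b3 \<or> b3 < b \<and> b < b1"
    and "0 < T (mu b1) (lam a)" "0 < T (mu b3) (lam a)" "0 < T (mu b) (lam a')"
  shows "a' = a"
  using assms unfolding plain_drawing_def
  by (metis less_trans linorder_neqE_nat)

lemma not_biplanar_if_spider:
  assumes "c < d" "r1 < d" "r2 < d" "r3 < d" "distinct [r1, r2, r3]"
    and "c1 < d" "c2 < d" "c3 < d" "c \<notin> {c1, c2, c3}"
    and "0 < T r1 c" "0 < T r2 c" "0 < T r3 c"
    and "0 < T r1 c1" "0 < T r2 c2" "0 < T r3 c3"
  shows "\<not> biplanar d T"
proof
  assume "biplanar d T"
  then obtain lam mu where lam: "bij_betw lam {..<d} {..<d}" and mu: "bij_betw mu {..<d} {..<d}"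
    and plain: "plain_drawing d T lam mu"
    unfolding biplanar_def by blast
  have height: "\<exists>a<d. f a = p" if "bij_betw f {..<d} {..<d}" "p < d" for f p
    using bij_betw_imp_surj_on[OF that(1)] that(2) by (metis imageE lessThan_iff)
  obtain a a1 a2 a3 where a: "a < d" "lam a = c" and a1: "a1 < d" "lam a1 = c1"
    and a2: "a2 < d" "lam a2 = c2" and a3: "a3 < d" "lam a3 = c3"
    using height[OF lam] assms(1,6-8) by metis
  obtain b1 b2 b3 where b1: "b1 < d" "mu b1 = r1" and b2: "b2 < d" "mu b2 = r2"
    and b3: "b3 < d" "mu b3 = r3"
    using height[OF mu] assms(2-4) by metis
  note adjacent = a a1 a2 a3 b1 b2 b3 assms(10-15)
  have away: "a1 \<noteq> a" "a2 \<noteq> a" "a3 \<noteq> a"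
    using a a1 a2 a3 assms(9) by auto
  have "distinct [b1, b2, b3]"
    using b1 b2 b3 assms(5) by auto
  then consider "b2 < b1 \<and> b1 < b3 \<or> b3 < b1 \<and> b1 < b2"
    | "b1 < b2 \<and> b2 < b3 \<or> b3 < b2 \<and> b2 < b1"
    | "b1 < b3 \<and> b3 < b2 \<or> b2 < b3 \<and> b3 < b1"
    by (auto simp: neq_iff)
  then show False
  proof cases
    case 1
    have "a1 = a"
      by (rule plain_drawing_middle_row[OF plain a(1) a1(1) b2(1) b3(1) 1]) (simp_all add: adjacent)
    with away show False by simp
  next
    case 2
    have "a2 = a"
      by (rule plain_drawing_middle_row[OF plain a(1) a2(1) b1(1) b3(1) 2]) (simp_all add: adjacent)
    with away show False by simp
  next
    case 3
    have "a3 = a"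
      by (rule plain_drawing_middle_row[OF plain a(1) a3(1) b1(1) b2(1) 3]) (simp_all add: adjacent)
    with away show False by simp
  qed
qed

lemma extreme_mat_if_determined_by_zeros:
  assumes "T \<in> S"
    and nonneg: "\<And>A i j. A \<in> S \<Longrightarrow> 0 \<le> A i j"
    and determined: "\<And>A. A \<in> S \<Longrightarrow> (\<And>i j. T i j = 0 \<Longrightarrow> A i j = 0) \<Longrightarrow> A = T"
  shows "extreme_mat T S"
  unfolding extreme_mat_def
proof (intro conjI notI)
  show "T \<in> S" by fact
next
  assume "\<exists>A\<in>S. \<exists>B\<in>S. A \<noteq> B \<and>
    (\<exists>t::real. 0 < t \<and> t < 1 \<and> T = (\<lambda>i j. (1 - t) * A i j + t * B i j))"
  then obtain A B t where A: "A \<in> S" and B: "B \<in> S" and "A \<noteq> B" and t: "0 < t" "t < 1"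
    and T: "\<And>i j. T i j = (1 - t) * A i j + t * B i j"
    by metis
  have zeros: "A i j = 0 \<and> B i j = 0" if "T i j = 0" for i j
  proof -
    have "0 \<le> (1 - t) * A i j" "0 \<le> t * B i j"
      using nonneg[OF A] nonneg[OF B] t by simp_all
    then show ?thesis
      using that T[of i j] t by (simp add: add_nonneg_eq_0_iff)
  qed
  have "A = T" "B = T"
    using determined[OF A] determined[OF B] zeros by blast+
  with \<open>A \<noteq> B\<close> show False by simp
qed

lemma TP_nonneg: "A \<in> TP E \<beta> d \<Longrightarrow> 0 \<le> A i j"
  unfolding TP_def by (cases "i < d \<and> j < d") auto

lemma TP_column_sum: "A \<in> TP E \<beta> d \<Longrightarrow> j < d \<Longrightarrow> (\<Sum>i<d. A i j) = 1"
  unfolding TP_def by simp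

lemma TP_fixes_gf: "A \<in> TP E \<beta> d \<Longrightarrow> i < d \<Longrightarrow> (\<Sum>j<d. A i j * gf E \<beta> d j) = gf E \<beta> d i"
  unfolding TP_def by simp

lemma Zf_pos: "0 < d \<Longrightarrow> 0 < Zf E \<beta> d"
  unfolding Zf_def qf_def by (auto intro!: sum_pos)

lemma gf_pos: "0 < d \<Longrightarrow> 0 < gf E \<beta> d i"
  unfolding gf_def using Zf_pos by (simp add: qf_def)

lemma inj_on_gf:
  assumes "0 < d" "\<beta> \<noteq> 0" "inj_on E {..<d}"
  shows "inj_on (gf E \<beta> d) {..<d}"
proof (rule inj_onI)
  fix i j assume ij: "i \<in> {..<d}" "j \<in> {..<d}" and "gf E \<beta> d i = gf E \<beta> d j"
  then have "qf E \<beta> i 0 = qf E \<beta> j 0"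
    using Zf_pos[OF assms(1), of E \<beta>] unfolding gf_def by simp
  then have "E i = E j"
    using assms(2) unfolding qf_def by simp
  then show "i = j"
    using assms(3) ij by (meson inj_onD)
qed

lemma exists_sorted_enumeration:
  fixes f :: "'a::linorder \<Rightarrow> 'b::linorder"
  assumes "finite A" "inj_on f A"
  shows "\<exists>xs. set xs = A \<and> distinct xs \<and> sorted_wrt (\<lambda>x y. f x < f y) xs"
proof -
  define xs where "xs = sort_key f (sorted_list_of_set A)"
  have "set xs = A" "distinct xs"
    using assms(1) unfolding xs_def by (simp_all only: set_sort distinct_sort) simp_all
  moreover have "sorted_wrt (<) (map f xs)"
    unfolding strict_sorted_iff distinct_map
    using \<open>set xs = A\<close> \<open>distinct xs\<close> assms(2) xs_def by simp
  ultimately show ?thesis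
    unfolding sorted_wrt_map by blast
qed

lemma exists_four_increasing:
  fixes f :: "nat \<Rightarrow> 'b::linorder"
  assumes "4 \<le> d" "inj_on f {..<d}"
  shows "\<exists>q1 q2 q3 q4. {q1, q2, q3, q4} \<subseteq> {..<d} \<and> distinct [q1, q2, q3, q4]
           \<and> f q1 < f q2 \<and> f q2 < f q3 \<and> f q3 < f q4"
proof -
  have "inj_on f {..<4}"
    using assms inj_on_subset by fastforce
  then obtain qs where qs: "set qs = {..<4}" "distinct qs" "sorted_wrt (\<lambda>x y. f x < f y) qs"
    using exists_sorted_enumeration[of "{..<4}" f] by blast
  then have "length qs = 4"
    using distinct_card by fastforce
  then obtain q1 q2 q3 q4 where q: "qs = [q1, q2, q3, q4]"
    by (auto simp: length_Suc_conv eval_nat_numeral)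
  have "{q1, q2, q3, q4} \<subseteq> {..<d}"
    using qs(1) assms(1) unfolding q by auto
  then show ?thesis
    using qs(2,3) unfolding q by auto
qed

locale spider =
  fixes d :: nat and g :: "nat \<Rightarrow> real" and p1 p2 p3 p4 :: nat
  assumes below_d: "{p1, p2, p3, p4} \<subseteq> {..<d}"
    and distinct: "distinct [p1, p2, p3, p4]"
    and g_decreasing: "0 < g p4" "g p4 < g p3" "g p3 < g p2" "g p2 < g p1"
begin

(* (i, j) stands for the edge {L_j, R_i} of G(T): row i, column j. *)
definition edges :: "(nat \<times> nat) set" where
  "edges = {(p1, p1), (p2, p1), (p3, p1), (p1, p2), (p4, p2), (p2, p3), (p3, p4)}
     \<union> {(i, i) | i. i < d \<and> i \<notin> {p1, p2, p3, p4}}"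

definition witness :: "nat \<Rightarrow> nat \<Rightarrow> real" where
  "witness i j =
     (if (i, j) \<notin> edges then 0
      else if (i, j) = (p1, p1) then (g p1 - g p2 + g p4) / g p1
      else if (i, j) = (p2, p1) then (g p2 - g p3) / g p1
      else if (i, j) = (p3, p1) then (g p3 - g p4) / g p1
      else if (i, j) = (p1, p2) then (g p2 - g p4) / g p2
      else if (i, j) = (p4, p2) then g p4 / g p2
      else 1)"

lemma edges_below_d: "(i, j) \<in> edges \<Longrightarrow> i < d \<and> j < d"
  using below_d unfolding edges_def by auto

lemma witness_values:
  "witness p1 p1 = (g p1 - g p2 + g p4) / g p1"
  "witness p2 p1 = (g p2 - g p3) / g p1"
  "witness p3 p1 = (g p3 - g p4) / g p1"
  "witness p1 p2 = (g p2 - g p4) / g p2"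
  "witness p4 p2 = g p4 / g p2"
  "witness p2 p3 = 1"
  "witness p3 p4 = 1"
  "i < d \<Longrightarrow> i \<notin> {p1, p2, p3, p4} \<Longrightarrow> witness i i = 1"
  using distinct by (auto simp: witness_def edges_def)

lemma witness_pos: "(i, j) \<in> edges \<Longrightarrow> 0 < witness i j"
  using g_decreasing unfolding edges_def by (auto simp: witness_values)

lemma witness_eq_0: "(i, j) \<notin> edges \<Longrightarrow> witness i j = 0"
  by (simp add: witness_def)

lemma sum_over_edges:
  assumes "\<And>i j. (i, j) \<notin> edges \<Longrightarrow> X i j = 0"
  shows "(\<Sum>i<d. X i j) = (\<Sum>i | (i, j) \<in> edges. X i j)"
    and "(\<Sum>j<d. X i j * g j) = (\<Sum>j | (i, j) \<in> edges. X i j * g j)"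
  by (rule sum.mono_neutral_right; auto intro: assms dest: edges_below_d)+

lemma column_sums_on_edges:
  fixes X :: "nat \<Rightarrow> nat \<Rightarrow> real"
  assumes "\<And>i j. (i, j) \<notin> edges \<Longrightarrow> X i j = 0"
  shows "(\<Sum>i<d. X i p1) = X p1 p1 + X p2 p1 + X p3 p1"
    and "(\<Sum>i<d. X i p2) = X p1 p2 + X p4 p2"
    and "(\<Sum>i<d. X i p3) = X p2 p3"
    and "(\<Sum>i<d. X i p4) = X p3 p4"
    and "j < d \<Longrightarrow> j \<notin> {p1, p2, p3, p4} \<Longrightarrow> (\<Sum>i<d. X i j) = X j j"
proof -
  have columns: "{i. (i, p1) \<in> edges} = {p1, p2, p3}" "{i. (i, p2) \<in> edges} = {p1, p4}"
    "{i. (i, p3) \<in> edges} = {p2}" "{i. (i, p4) \<in> edges} = {p3}"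
    "j < d \<Longrightarrow> j \<notin> {p1, p2, p3, p4} \<Longrightarrow> {i. (i, j) \<in> edges} = {j}"
    using distinct by (auto simp: edges_def)
  show "(\<Sum>i<d. X i p1) = X p1 p1 + X p2 p1 + X p3 p1"
    and "(\<Sum>i<d. X i p2) = X p1 p2 + X p4 p2"
    and "(\<Sum>i<d. X i p3) = X p2 p3"
    and "(\<Sum>i<d. X i p4) = X p3 p4"
    and "j < d \<Longrightarrow> j \<notin> {p1, p2, p3, p4} \<Longrightarrow> (\<Sum>i<d. X i j) = X j j"
    using distinct by (simp_all add: sum_over_edges(1)[where X = X, OF assms] columns add.assoc)
qed

lemma row_sums_on_edges:
  fixes X :: "nat \<Rightarrow> nat \<Rightarrow> real"
  assumes "\<And>i j. (i, j) \<notin> edges \<Longrightarrow> X i j = 0"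
  shows "(\<Sum>j<d. X p1 j * g j) = X p1 p1 * g p1 + X p1 p2 * g p2"
    and "(\<Sum>j<d. X p2 j * g j) = X p2 p1 * g p1 + X p2 p3 * g p3"
    and "(\<Sum>j<d. X p3 j * g j) = X p3 p1 * g p1 + X p3 p4 * g p4"
    and "(\<Sum>j<d. X p4 j * g j) = X p4 p2 * g p2"
    and "i < d \<Longrightarrow> i \<notin> {p1, p2, p3, p4} \<Longrightarrow> (\<Sum>j<d. X i j * g j) = X i i * g i"
proof -
  have rows: "{j. (p1, j) \<in> edges} = {p1, p2}" "{j. (p2, j) \<in> edges} = {p1, p3}"
    "{j. (p3, j) \<in> edges} = {p1, p4}" "{j. (p4, j) \<in> edges} = {p2}"
    "i < d \<Longrightarrow> i \<notin> {p1, p2, p3, p4} \<Longrightarrow> {j. (i, j) \<in> edges} = {i}"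
    using distinct by (auto simp: edges_def)
  show "(\<Sum>j<d. X p1 j * g j) = X p1 p1 * g p1 + X p1 p2 * g p2"
    and "(\<Sum>j<d. X p2 j * g j) = X p2 p1 * g p1 + X p2 p3 * g p3"
    and "(\<Sum>j<d. X p3 j * g j) = X p3 p1 * g p1 + X p3 p4 * g p4"
    and "(\<Sum>j<d. X p4 j * g j) = X p4 p2 * g p2"
    and "i < d \<Longrightarrow> i \<notin> {p1, p2, p3, p4} \<Longrightarrow> (\<Sum>j<d. X i j * g j) = X i i * g i"
    using distinct by (simp_all add: sum_over_edges(2)[where X = X, OF assms] rows)
qed

lemma g_pos: "0 < g p1" "0 < g p2" "0 < g p3" "0 < g p4"
  using g_decreasing by linarith+

lemma witness_column_sums: "j < d \<Longrightarrow> (\<Sum>i<d. witness i j) = 1"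
  using column_sums_on_edges[where X = witness, OF witness_eq_0] g_pos
  by (auto simp: witness_values field_simps)

lemma witness_fixes_g: "i < d \<Longrightarrow> (\<Sum>j<d. witness i j * g j) = g i"
  using row_sums_on_edges[where X = witness, OF witness_eq_0] g_pos
  by (auto simp: witness_values field_simps)

lemma witness_unique:
  assumes off: "\<And>i j. (i, j) \<notin> edges \<Longrightarrow> A i j = 0"
    and col: "\<And>j. j < d \<Longrightarrow> (\<Sum>i<d. A i j) = 1"
    and row: "\<And>i. i < d \<Longrightarrow> (\<Sum>j<d. A i j * g j) = g i"
  shows "A = witness"
proof -
  note col_sums = column_sums_on_edges[where X = A, OF off]
  note row_sums = row_sums_on_edges[where X = A, OF off]
  have col_eqs: "A p1 p2 + A p4 p2 = 1" "A p2 p3 = 1" "A p3 p4 = 1"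
    and diag: "\<And>i. i < d \<Longrightarrow> i \<notin> {p1, p2, p3, p4} \<Longrightarrow> A i i = 1"
    using col col_sums below_d by auto
  have row_eqs: "A p1 p1 * g p1 + A p1 p2 * g p2 = g p1" "A p2 p1 * g p1 + A p2 p3 * g p3 = g p2"
    "A p3 p1 * g p1 + A p3 p4 * g p4 = g p3" "A p4 p2 * g p2 = g p4"
    using row row_sums below_d by auto
  have "A p1 p2 = 1 - A p4 p2"
    using col_eqs(1) by linarith
  then have A12_times_g2: "A p1 p2 * g p2 = g p2 - g p4"
    using row_eqs(4) by (simp add: left_diff_distrib)
  have v42: "A p4 p2 = g p4 / g p2"
    using row_eqs(4) g_pos by (simp add: eq_divide_eq)
  have v12: "A p1 p2 = (g p2 - g p4) / g p2"
    using A12_times_g2 g_pos by (simp add: eq_divide_eq)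
  have v11: "A p1 p1 = (g p1 - g p2 + g p4) / g p1"
    using row_eqs(1) A12_times_g2 g_pos by (simp add: eq_divide_eq)
  have v21: "A p2 p1 = (g p2 - g p3) / g p1"
    using row_eqs(2) col_eqs(2) g_pos by (simp add: eq_divide_eq)
  have v31: "A p3 p1 = (g p3 - g p4) / g p1"
    using row_eqs(3) col_eqs(3) g_pos by (simp add: eq_divide_eq)
  show ?thesis
  proof (intro ext)
    fix i j
    show "A i j = witness i j"
    proof (cases "(i, j) \<in> edges")
      case True
      then show ?thesis
        using col_eqs v42 v12 v11 v21 v31 diag unfolding edges_def by (auto simp: witness_values)
    next
      case False
      then show ?thesis using off witness_eq_0 by simp
    qed
  qed
qed

lemma witness_nonneg: "0 \<le> witness i j"
  by (cases "(i, j) \<in> edges") (simp_all add: witness_pos less_imp_le witness_eq_0)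

lemma witness_in_TP:
  assumes "g = gf E \<beta> d"
  shows "witness \<in> TP E \<beta> d"
proof -
  have "witness i j = 0" if "d \<le> i \<or> d \<le> j" for i j
    using that edges_below_d witness_eq_0 by (meson not_le)
  then show ?thesis
    unfolding TP_def assms[symmetric]
    using witness_nonneg witness_column_sums witness_fixes_g by simp
qed

lemma witness_extreme:
  assumes "g = gf E \<beta> d"
  shows "extreme_mat witness (TP E \<beta> d)"
proof (rule extreme_mat_if_determined_by_zeros)
  show "witness \<in> TP E \<beta> d"
    using witness_in_TP[OF assms] .
next
  fix A assume A: "A \<in> TP E \<beta> d" and zeros: "\<And>i j. witness i j = 0 \<Longrightarrow> A i j = 0"
  show "A = witness"
  proof (rule witness_unique)
    show "A i j = 0" if "(i, j) \<notin> edges" for i j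
      using zeros witness_eq_0 that by blast
  qed (use TP_column_sum[OF A] TP_fixes_gf[OF A] assms in simp_all)
qed (rule TP_nonneg)

lemma witness_not_biplanar: "\<not> biplanar d witness"
  by (rule not_biplanar_if_spider[of p1 d p1 p2 p3 p2 p3 p4])
    (use below_d distinct in \<open>simp_all add: witness_pos edges_def\<close>)

end

theorem mainTheorem11:
  fixes d :: nat and \<beta> :: real and E :: "nat \<Rightarrow> real"
  assumes "4 \<le> d" and "0 < \<beta>" and "E 0 = 0" and "inj_on E {..<d}"
  shows "\<exists>T. extreme_mat T (TP E \<beta> d) \<and> \<not> biplanar d T"
proof -
  have "0 < d" using assms(1) by simp
  have "inj_on (gf E \<beta> d) {..<d}"
    using inj_on_gf[OF \<open>0 < d\<close>] assms(2,4) by simp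
  then obtain q1 q2 q3 q4 where "{q1, q2, q3, q4} \<subseteq> {..<d}" "distinct [q1, q2, q3, q4]"
    "gf E \<beta> d q1 < gf E \<beta> d q2" "gf E \<beta> d q2 < gf E \<beta> d q3" "gf E \<beta> d q3 < gf E \<beta> d q4"
    using exists_four_increasing[OF assms(1)] by blast
  then interpret spider d "gf E \<beta> d" q4 q3 q2 q1
    using gf_pos[OF \<open>0 < d\<close>] by unfold_locales auto
  show ?thesis
    using witness_extreme witness_not_biplanar by blast
qed

end
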